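(* Let $s\in(0,1)$, let $a$ be a spectral measure on $\mathbb S^{n-1}$, let $\Omega\subset\mathbb R^n$ be open and $u\in C^2(\Omega)\cap L^\infty(\mathbb R^n)$. Then for every $x\in\Omega$, $$u(x)=\mathscr M^s_r u(x)+c(n,s,a)\,r^{2s}\,\mathcal L u(x)+\mathcal O(r^2)\qquad\text{as } r\to0.$$
   Context: A spectral measure is a non-negative finite Borel measure $a$ on $\mathbb S^{n-1}$ with $0<\int_{\mathbb S^{n-1}}da\le\Lambda$ for some $\Lambda>0$. With $\delta(u,x,y)=2u(x)-u(x-y)-u(x+y)$: $$\mathcal L u(x)=\int_0^\infty d\rho\int_{\mathbb S^{n-1}}da(\omega)\,\frac{\delta(u,x,\rho\omega)}{\rho^{1+2s}},\qquad \mathscr M^s_r u(x)=c(n,s,a)\,r^{2s}\int_r^\infty d\rho\int_{\mathbb S^{n-1}}da(\omega)\,\frac{u(x+\rho\omega)+u(x-\rho\omega)}{(\rho^2-r^2)^s\rho},$$ with $c(n,s,a)=\frac{\sin\pi s}{\pi}\big(\int_{\mathbb S^{n-1}}da\big)^{-1}$. *)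

theory Defs
  imports "HOL-Analysis.Analysis" "HOL-Library.Landau_Symbols"
begin

definition spectral_measure :: "'a::euclidean_space measure \<Rightarrow> bool" where
  "spectral_measure a \<longleftrightarrow>
     sets a = sets (restrict_space borel (sphere (0::'a) 1)) \<and>
     finite_measure a \<and> 0 < emeasure a (space a)"

definition C2_on :: "'a::euclidean_space set \<Rightarrow> ('a \<Rightarrow> real) \<Rightarrow> bool" where
  "C2_on S u \<longleftrightarrow>
     (\<exists>(Du :: 'a \<Rightarrow> ('a \<Rightarrow>\<^sub>L real)) (D2u :: 'a \<Rightarrow> ('a \<Rightarrow>\<^sub>L ('a \<Rightarrow>\<^sub>L real))).
        (\<forall>x\<in>S. (u has_derivative blinfun_apply (Du x)) (at x)) \<and>
        (\<forall>x\<in>S. (Du has_derivative blinfun_apply (D2u x)) (at x)) \<and>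
        continuous_on S D2u)"

definition delta_u :: "('a::euclidean_space \<Rightarrow> real) \<Rightarrow> 'a \<Rightarrow> 'a \<Rightarrow> real" where
  "delta_u u x y = 2 * u x - u (x - y) - u (x + y)"

definition cnsa :: "real \<Rightarrow> 'a::euclidean_space measure \<Rightarrow> real" where
  "cnsa s a = sin (pi * s) / pi / measure a (space a)"

definition Lop :: "real \<Rightarrow> 'a::euclidean_space measure \<Rightarrow> ('a \<Rightarrow> real) \<Rightarrow> 'a \<Rightarrow> real" where
  "Lop s a u x =
     (LINT \<rho>:{0<..}|lborel. (\<integral>\<omega>. delta_u u x (\<rho> *\<^sub>R \<omega>) / \<rho> powr (1 + 2 * s) \<partial>a))"

definition Mop :: "real \<Rightarrow> 'a::euclidean_space measure \<Rightarrow> real \<Rightarrow> ('a \<Rightarrow> real) \<Rightarrow> 'a \<Rightarrow> real" where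
  "Mop s a r u x = cnsa s a * r powr (2 * s) *
     (LINT \<rho>:{r<..}|lborel. (\<integral>\<omega>. (u (x + \<rho> *\<^sub>R \<omega>) + u (x - \<rho> *\<^sub>R \<omega>))
                                   / ((\<rho>\<^sup>2 - r\<^sup>2) powr s * \<rho>) \<partial>a))"

end

theory Submission
  imports Defs
begin

text \<open>
  Put F(rho) = int delta(u, x, rho w) da(w) and A = a(S^{n-1}). Then
  L u(x) = int_0^oo F(rho) rho^{-1-2s} drho and
  M^s_r u(x) = c r^{2s} int_r^oo (2 A u(x) - F(rho)) / ((rho^2 - r^2)^s rho) drho.
  The substitution rho = r (1 - w)^{-1/2} turns the kernel integral into the Beta integral
  B(1 - s, s) = pi / sin(pi s), which is exactly what makes the u(x) terms cancel, leaving
  c r^{2s} times the difference of the two radial integrals of F. Since u is C^2 near x and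
  bounded, |F(rho)| <= B rho^2; the two kernels differ by a nonnegative amount whose
  rho^2-weighted integral over (r, oo), like that of rho^{1-2s} over (0, r], is r^{2-2s} / (2 - 2s).
  Hence the difference of the radial integrals is O(r^{2-2s}) and the error is O(r^2).
\<close>

lemma Beta_complement:
  assumes "0 < s" "s < 1"
  shows "Beta (1 - s) s = pi / sin (pi * s)"
proof -
  have "complex_of_real (Gamma s * Gamma (1 - s)) = Gamma (complex_of_real s) * Gamma (1 - complex_of_real s)"
    by (simp flip: Gamma_complex_of_real)
  also have "\<dots> = complex_of_real (pi / sin (pi * s))"
    by (simp add: Gamma_reflection_complex flip: sin_of_real)
  finally show ?thesis
    by (simp only: of_real_eq_iff) (simp add: Beta_def mult.commute)
qed

lemma Beta_complement_integral:
  assumes "0 < s" "s < 1"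
  shows "set_integrable lborel {0<..<1} (\<lambda>w. w powr (- s) * (1 - w) powr (s - 1))"
    and "(LINT w:{0<..<1}|lborel. w powr (- s) * (1 - w) powr (s - 1)) = pi / sin (pi * s)"
proof -
  let ?h = "\<lambda>w::real. w powr (- s) * (1 - w) powr (s - 1)"
  have int: "set_integrable lborel {0..1} ?h"
    using integrable_Beta[of "1 - s" s] assms by (simp add: diff_diff_eq)
  then show "set_integrable lborel {0<..<1} (\<lambda>w. w powr (- s) * (1 - w) powr (s - 1))"
    by (rule set_integrable_subset) auto
  have "(LINT w:{0<..<1}|lborel. ?h w) = (LINT w:{0..1}|lborel. ?h w)"
    by (rule set_integral_discrete_difference[where X="{0, 1}"]) auto
  also have "\<dots> = Beta (1 - s) s"
    using set_borel_integral_eq_integral(2)[OF int] has_integral_Beta_real[of "1 - s" s] assms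
    by (simp add: integral_unique diff_diff_eq)
  finally show "(LINT w:{0<..<1}|lborel. w powr (- s) * (1 - w) powr (s - 1)) = pi / sin (pi * s)"
    using Beta_complement[OF assms] by simp
qed

lemma mean_kernel_substitution:
  fixes r s w :: real
  assumes r: "0 < r" and w: "0 < w" "w < 1"
  defines "g \<equiv> r * (1 - w) powr (-1/2)"
  shows "1 / ((g\<^sup>2 - r\<^sup>2) powr s * g) * (r / 2 * (1 - w) powr (-3/2))
           = r powr (- (2 * s)) / 2 * (w powr (- s) * (1 - w) powr (s - 1))"
proof -
  define q where "q = 1 - w"
  have q: "0 < q" "q < 1" using w by (auto simp: q_def)
  have "(q powr (-1/2))\<^sup>2 = q powr (-1/2) * q powr (-1/2)" by (simp add: power2_eq_square)
  also have "\<dots> = 1 / q" using q by (simp flip: powr_add add: powr_minus_divide)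
  finally have "g\<^sup>2 = r\<^sup>2 / q" by (simp add: g_def q_def[symmetric] power_mult_distrib)
  then have g2: "g\<^sup>2 - r\<^sup>2 = r\<^sup>2 * w / q" using q by (simp add: q_def field_simps)
  have ln_g2: "ln (r\<^sup>2 * w / q) = 2 * ln r + ln w - ln q"
    using r w q by (simp add: ln_mult ln_div ln_realpow)
  have "1 / ((g\<^sup>2 - r\<^sup>2) powr s * g) * (r / 2 * q powr (-3/2))
      = 1 / ((r\<^sup>2 * w / q) powr s * g) * (r / 2 * q powr (-3/2))"
    by (simp only: g2)
  also have "\<dots> = 1 / (exp (s * ln (r\<^sup>2 * w / q)) * (r * exp (-1/2 * ln q))) * (r / 2 * exp (-3/2 * ln q))"
    using q r w by (simp add: g_def q_def[symmetric] powr_def)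
  also have "\<dots> = exp (- (2 * s) * ln r) / 2 * (exp (- s * ln w) * exp ((s - 1) * ln q))"
    unfolding ln_g2 using r
    by (simp add: exp_add[symmetric] exp_diff exp_minus algebra_simps divide_simps)
  also have "\<dots> = r powr (- (2 * s)) / 2 * (w powr (- s) * q powr (s - 1))"
    using r w q by (simp add: powr_def)
  finally show ?thesis by (simp only: q_def)
qed

lemma mean_kernel_integral_substitution:
  fixes r s :: real
  assumes s: "0 < s" "s < 1" and r: "0 < r"
  shows "set_integrable lborel {r<..} (\<lambda>\<rho>. 1 / ((\<rho>\<^sup>2 - r\<^sup>2) powr s * \<rho>))"
    and "(LINT \<rho>:{r<..}|lborel. 1 / ((\<rho>\<^sup>2 - r\<^sup>2) powr s * \<rho>))
           = (LINT w:{0<..<1}|lborel. r powr (- (2 * s)) / 2 * (w powr (- s) * (1 - w) powr (s - 1)))"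
proof -
  define f where "f = (\<lambda>\<rho>::real. 1 / ((\<rho>\<^sup>2 - r\<^sup>2) powr s * \<rho>))"
  define g where "g = (\<lambda>w::real. r * (1 - w) powr (-1/2))"
  define g' where "g' = (\<lambda>w::real. r / 2 * (1 - w) powr (-3/2))"
  define h where "h = (\<lambda>w::real. r powr (- (2 * s)) / 2 * (w powr (- s) * (1 - w) powr (s - 1)))"
  have fg: "f (g w) * g' w = h w" if "0 < w" "w < 1" for w
    using mean_kernel_substitution[OF r that] by (simp add: f_def g_def g'_def h_def)
  have h_int: "set_integrable lborel {0<..<1} h"
    unfolding h_def using Beta_complement_integral(1)[OF s] by (rule set_integrable_mult_right)
  have g_gt: "r < g w" if "0 < w" "w < 1" for w
  proof -
    have "(1 - w) powr (1/2) < 1 powr (1/2)" using that by (intro powr_less_mono2) auto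
    then have "1 < (1 - w) powr (-1/2)" using that by (simp add: powr_minus_divide)
    then show ?thesis using r by (simp add: g_def)
  qed
  have "r\<^sup>2 < (g w)\<^sup>2" if "0 < w" "w < 1" for w
    using g_gt[OF that] r by (simp add: power_strict_mono)
  then have f_cont: "isCont f (g w)" if "0 < w" "w < 1" for w
    using g_gt[OF that] r that unfolding f_def by (intro continuous_intros) auto
  have g_lim_0: "((ereal \<circ> g \<circ> real_of_ereal) \<longlongrightarrow> ereal r) (at_right (ereal 0))"
    unfolding ereal_tendsto_simps g_def by (rule tendsto_eq_intros refl | simp)+
  have g_lim_1: "((ereal \<circ> g \<circ> real_of_ereal) \<longlongrightarrow> \<infinity>) (at_left (ereal 1))"
    unfolding ereal_tendsto_simps g_def using r by real_asymp
  have fg_int: "set_integrable lborel (einterval (ereal 0) (ereal 1)) (\<lambda>w. f (g w) * g' w)"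
    unfolding einterval_eq_Icc by (subst set_integrable_cong[OF refl refl fg]) (use h_int in auto)
  have g_deriv: "(g has_real_derivative g' w) (at w)" if "0 < w" "w < 1" for w
    using that unfolding g_def g'_def by (auto intro!: derivative_eq_intros simp: field_simps powr_diff)
  have g'_cont: "isCont g' w" if "0 < w" "w < 1" for w
    using that unfolding g'_def by (intro continuous_intros) auto
  have f_nonneg: "0 \<le> f (g w)" if "0 < w" "w < 1" for w
    using g_gt[OF that] r by (simp add: f_def)
  have g'_nonneg: "0 \<le> g' w" for w
    using r by (simp add: g'_def)
  have subst: "set_integrable lborel (einterval (ereal r) \<infinity>) f"
    "(LBINT \<rho>=ereal r..\<infinity>. f \<rho>) = (LBINT w=ereal 0..ereal 1. f (g w) * g' w)"
    by (rule interval_integral_substitution_nonneg[of "ereal 0" "ereal 1" g g' f "ereal r" \<infinity>,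
          OF _ _ _ _ _ _ g_lim_0 g_lim_1 fg_int]; simp add: g_deriv f_cont g'_cont f_nonneg g'_nonneg)+
  show "set_integrable lborel {r<..} (\<lambda>\<rho>. 1 / ((\<rho>\<^sup>2 - r\<^sup>2) powr s * \<rho>))"
    using subst(1) by (simp add: f_def)
  have "(LINT \<rho>:{r<..}|lborel. f \<rho>) = (LBINT w=ereal 0..ereal 1. f (g w) * g' w)"
    by (simp add: interval_integral_Ioi flip: subst(2))
  also have "\<dots> = (LINT w:{0<..<1}|lborel. h w)"
    by (simp add: interval_integral_Ioo) (rule set_lebesgue_integral_cong; simp add: fg)
  finally show "(LINT \<rho>:{r<..}|lborel. 1 / ((\<rho>\<^sup>2 - r\<^sup>2) powr s * \<rho>))
      = (LINT w:{0<..<1}|lborel. r powr (- (2 * s)) / 2 * (w powr (- s) * (1 - w) powr (s - 1)))"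
    by (simp add: f_def h_def)
qed

lemma mean_kernel_integral:
  fixes r s :: real
  assumes s: "0 < s" "s < 1" and r: "0 < r"
  shows "set_integrable lborel {r<..} (\<lambda>\<rho>. 1 / ((\<rho>\<^sup>2 - r\<^sup>2) powr s * \<rho>))"
    and "(LINT \<rho>:{r<..}|lborel. 1 / ((\<rho>\<^sup>2 - r\<^sup>2) powr s * \<rho>)) = r powr (- (2 * s)) * pi / (2 * sin (pi * s))"
  using mean_kernel_integral_substitution[OF s r] Beta_complement_integral(2)[OF s]
  by (simp_all add: set_integral_mult_right)

lemma set_integrable_abs_le:
  fixes f g :: "'a \<Rightarrow> real"
  assumes g: "set_integrable M A g" and f: "set_borel_measurable M A f"
    and le: "\<And>x. x \<in> A \<Longrightarrow> \<bar>f x\<bar> \<le> g x"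
  shows "set_integrable M A f" and "\<bar>LINT x:A|M. f x\<bar> \<le> (LINT x:A|M. g x)"
proof -
  show f_int: "set_integrable M A f"
    by (rule set_integrable_bound[OF g f]) (auto intro!: AE_I2 dest: le)
  have "\<bar>LINT x:A|M. f x\<bar> \<le> (LINT x:A|M. \<bar>f x\<bar>)"
    using set_integral_norm_bound[OF f_int] by simp
  also have "\<dots> \<le> (LINT x:A|M. g x)"
    by (rule set_integral_mono[OF set_integrable_abs[OF f_int] g le])
  finally show "\<bar>LINT x:A|M. f x\<bar> \<le> (LINT x:A|M. g x)" .
qed

lemma set_integral_powr_Ioc:
  fixes p b :: real
  assumes p: "-1 < p" and b: "0 < b"
  shows "set_integrable lborel {0<..b} (\<lambda>\<rho>. \<rho> powr p)"
    and "(LINT \<rho>:{0<..b}|lborel. \<rho> powr p) = b powr (p + 1) / (p + 1)"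
proof -
  define G where "G = (\<lambda>x::real. x powr (p + 1) / (p + 1))"
  have G_deriv: "(G has_real_derivative x powr p) (at x)" if "0 < x" for x
  proof -
    have "(G has_real_derivative (p + 1) * x powr (p + 1 - 1) / (p + 1)) (at x)"
      unfolding G_def using that p by (intro derivative_eq_intros DERIV_powr) auto
    then show ?thesis using p by simp
  qed
  have cont: "isCont (\<lambda>x. x powr p) x" if "0 < x" for x
    using that by (intro continuous_intros) auto
  have G_lim_0: "((G \<circ> real_of_ereal) \<longlongrightarrow> 0) (at_right (ereal 0))"
    unfolding ereal_tendsto_simps G_def using p
    by (intro tendsto_eq_intros tendsto_zero_powrI[where F="at_right 0"])
       (auto intro: tendsto_ident_at eventually_at_right_less[THEN eventually_mono])
  have G_lim_b: "((G \<circ> real_of_ereal) \<longlongrightarrow> G b) (at_left (ereal b))"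
    unfolding ereal_tendsto_simps G_def using b p
    by (intro tendsto_eq_intros tendsto_ident_at) auto
  note ftc = interval_integral_FTC_nonneg[of "ereal 0" "ereal b" G, OF _ _ _ _ G_lim_0 G_lim_b]
  have Ioo_int: "set_integrable lborel {0<..<b} (\<lambda>\<rho>. \<rho> powr p)"
    using ftc(1) b G_deriv cont by auto
  show "set_integrable lborel {0<..b} (\<lambda>\<rho>. \<rho> powr p)"
    using Ioo_int by (subst set_integrable_discrete_difference[where X="{b}"]) auto
  have "(LINT \<rho>:{0<..b}|lborel. \<rho> powr p) = (LBINT \<rho>=ereal 0..ereal b. \<rho> powr p)"
    using b by (simp add: interval_integral_Ioc)
  also have "\<dots> = G b"
    using ftc(2) b G_deriv cont by auto
  finally show "(LINT \<rho>:{0<..b}|lborel. \<rho> powr p) = b powr (p + 1) / (p + 1)"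
    by (simp add: G_def)
qed

lemma powr_le_mean_kernel:
  fixes r s x :: real
  assumes "0 \<le> s" "0 \<le> r" "r < x"
  shows "x powr (1 - 2 * s) \<le> x * (x\<^sup>2 - r\<^sup>2) powr (- s)"
proof -
  have x: "0 < x" "0 < x\<^sup>2 - r\<^sup>2" using assms by (auto simp: power_strict_mono)
  have "x powr (1 - 2 * s) = x * (x\<^sup>2) powr (- s)"
    using x by (simp add: powr_diff powr_powr powr_minus_divide flip: powr_numeral)
  also have "\<dots> \<le> x * (x\<^sup>2 - r\<^sup>2) powr (- s)"
    using x assms by (intro mult_left_mono powr_mono2') auto
  finally show ?thesis .
qed

lemma mean_kernel_diff_integral:
  fixes r s :: real
  assumes s: "0 < s" "s < 1" and r: "0 < r"
  shows "set_integrable lborel {r<..} (\<lambda>\<rho>. \<rho> * (\<rho>\<^sup>2 - r\<^sup>2) powr (- s) - \<rho> powr (1 - 2 * s))"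
    and "(LINT \<rho>:{r<..}|lborel. \<rho> * (\<rho>\<^sup>2 - r\<^sup>2) powr (- s) - \<rho> powr (1 - 2 * s))
           = r powr (2 - 2 * s) / (2 - 2 * s)"
proof -
  define G where "G = (\<lambda>x::real. ((x\<^sup>2 - r\<^sup>2) powr (1 - s) - x powr (2 - 2 * s)) / (2 - 2 * s))"
  have pos: "0 < x" "0 < x\<^sup>2 - r\<^sup>2" if "r < x" for x
    using that r by (auto simp: power_strict_mono)
  have G_deriv: "(G has_real_derivative x * (x\<^sup>2 - r\<^sup>2) powr (- s) - x powr (1 - 2 * s)) (at x)"
    if "r < x" for x
  proof -
    have "(G has_real_derivative ((1 - s) * (x\<^sup>2 - r\<^sup>2) powr (1 - s - 1) * (2 * x)
            - (2 - 2 * s) * x powr (2 - 2 * s - 1)) / (2 - 2 * s)) (at x)"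
      unfolding G_def using pos[OF that] s by (intro derivative_eq_intros DERIV_powr) auto
    moreover have "((1 - s) * A * (2 * x) - (2 - 2 * s) * C) / (2 - 2 * s) = x * A - C" for A C :: real
      using s by (simp add: field_simps)
    moreover have "1 - s - 1 = - s" "2 - 2 * s - 1 = 1 - 2 * s" by simp_all
    ultimately show ?thesis by metis
  qed
  have cont: "isCont (\<lambda>x. x * (x\<^sup>2 - r\<^sup>2) powr (- s) - x powr (1 - 2 * s)) x" if "r < x" for x
    using pos[OF that] by (intro continuous_intros) auto
  have nonneg: "0 \<le> x * (x\<^sup>2 - r\<^sup>2) powr (- s) - x powr (1 - 2 * s)" if "r < x" for x
    using powr_le_mean_kernel[of s r x] that s r by simp
  have G_lim_r: "((G \<circ> real_of_ereal) \<longlongrightarrow> (0 - r powr (2 - 2 * s)) / (2 - 2 * s)) (at_right (ereal r))"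
    unfolding ereal_tendsto_simps G_def using s r
  proof (intro tendsto_intros tendsto_zero_powrI[where F="at_right r" and b="1 - s"])
    show "((\<lambda>x. x\<^sup>2 - r\<^sup>2) \<longlongrightarrow> 0) (at_right r)"
      by (rule tendsto_eq_intros tendsto_ident_at refl | simp)+
    show "\<forall>\<^sub>F x in at_right r. 0 \<le> x\<^sup>2 - r\<^sup>2"
      using eventually_at_right_less[of r] r by (auto elim!: eventually_mono intro: power_mono)
  qed (use s r in auto)
  have G_lim_inf: "((G \<circ> real_of_ereal) \<longlongrightarrow> 0) (at_left \<infinity>)"
    unfolding ereal_tendsto_simps G_def using s r by real_asymp
  note ftc = interval_integral_FTC_nonneg[of "ereal r" \<infinity> G, OF _ _ _ _ G_lim_r G_lim_inf]
  show "set_integrable lborel {r<..} (\<lambda>\<rho>. \<rho> * (\<rho>\<^sup>2 - r\<^sup>2) powr (- s) - \<rho> powr (1 - 2 * s))"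
    using ftc(1) G_deriv cont nonneg by auto
  have "(LBINT x=ereal r..\<infinity>. x * (x\<^sup>2 - r\<^sup>2) powr (- s) - x powr (1 - 2 * s))
          = 0 - (0 - r powr (2 - 2 * s)) / (2 - 2 * s)"
    using ftc(2) G_deriv cont nonneg by auto
  then show "(LINT \<rho>:{r<..}|lborel. \<rho> * (\<rho>\<^sup>2 - r\<^sup>2) powr (- s) - \<rho> powr (1 - 2 * s))
               = r powr (2 - 2 * s) / (2 - 2 * s)"
    by (simp add: interval_integral_Ioi)
qed

lemma power2_div_powr:
  fixes x q :: real
  assumes "0 < x"
  shows "x\<^sup>2 / x powr q = x powr (2 - q)"
  using assms by (simp add: powr_diff flip: powr_numeral)

lemma mean_kernel_diff_le:
  fixes r s x y B :: real
  assumes "0 \<le> s" "0 < r" "r < x" and y: "\<bar>y\<bar> \<le> B * x\<^sup>2"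
  shows "\<bar>y / ((x\<^sup>2 - r\<^sup>2) powr s * x) - y / x powr (1 + 2 * s)\<bar>
           \<le> B * (x * (x\<^sup>2 - r\<^sup>2) powr (- s) - x powr (1 - 2 * s))"
proof -
  have x: "0 < x" "0 < x\<^sup>2 - r\<^sup>2" using assms by (auto simp: power_strict_mono)
  define k where "k = 1 / ((x\<^sup>2 - r\<^sup>2) powr s * x) - 1 / x powr (1 + 2 * s)"
  have "x\<^sup>2 / ((x\<^sup>2 - r\<^sup>2) powr s * x) = x * (x\<^sup>2 - r\<^sup>2) powr (- s)"
    using x by (simp add: powr_minus divide_simps power2_eq_square)
  moreover have "x\<^sup>2 / x powr (1 + 2 * s) = x powr (1 - 2 * s)"
    using x by (simp add: power2_div_powr)
  ultimately have xk: "x\<^sup>2 * k = x * (x\<^sup>2 - r\<^sup>2) powr (- s) - x powr (1 - 2 * s)"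
    by (simp add: k_def right_diff_distrib)
  then have "0 \<le> x\<^sup>2 * k"
    using powr_le_mean_kernel[of s r x] assms by simp
  then have "0 \<le> k"
    using x by (simp add: zero_le_mult_iff)
  have "y / ((x\<^sup>2 - r\<^sup>2) powr s * x) - y / x powr (1 + 2 * s) = y * k"
    by (simp add: k_def right_diff_distrib)
  then have "\<bar>y / ((x\<^sup>2 - r\<^sup>2) powr s * x) - y / x powr (1 + 2 * s)\<bar> = \<bar>y\<bar> * k"
    using \<open>0 \<le> k\<close> by (simp add: abs_mult)
  also have "\<dots> \<le> B * x\<^sup>2 * k"
    using y \<open>0 \<le> k\<close> by (rule mult_right_mono)
  also have "\<dots> = B * (x * (x\<^sup>2 - r\<^sup>2) powr (- s) - x powr (1 - 2 * s))"
    by (simp only: mult.assoc xk)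
  finally show ?thesis .
qed

lemma mean_kernel_tail_bound:
  fixes F :: "real \<Rightarrow> real"
  assumes F_meas: "F \<in> borel_measurable borel"
    and F_quad: "\<And>\<rho>. 0 < \<rho> \<Longrightarrow> \<bar>F \<rho>\<bar> \<le> B * \<rho>\<^sup>2" and F_bdd: "\<And>\<rho>. \<bar>F \<rho>\<bar> \<le> B'"
    and s: "0 < s" "s < 1" and r: "0 < r"
  shows "set_integrable lborel {r<..} (\<lambda>\<rho>. F \<rho> / ((\<rho>\<^sup>2 - r\<^sup>2) powr s * \<rho>))"
    and "set_integrable lborel {r<..} (\<lambda>\<rho>. F \<rho> / \<rho> powr (1 + 2 * s))"
    and "\<bar>(LINT \<rho>:{r<..}|lborel. F \<rho> / ((\<rho>\<^sup>2 - r\<^sup>2) powr s * \<rho>))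
          - (LINT \<rho>:{r<..}|lborel. F \<rho> / \<rho> powr (1 + 2 * s))\<bar> \<le> B * r powr (2 - 2 * s) / (2 - 2 * s)"
proof -
  let ?FD = "\<lambda>\<rho>. F \<rho> / ((\<rho>\<^sup>2 - r\<^sup>2) powr s * \<rho>)" and ?FE = "\<lambda>\<rho>. F \<rho> / \<rho> powr (1 + 2 * s)"
  let ?diff = "\<lambda>\<rho>. B * (\<rho> * (\<rho>\<^sup>2 - r\<^sup>2) powr (- s) - \<rho> powr (1 - 2 * s))"
  have [measurable]: "F \<in> borel_measurable lborel" using F_meas by simp
  have FD_int: "set_integrable lborel {r<..} ?FD"
  proof (rule set_integrable_abs_le)
    show "set_integrable lborel {r<..} (\<lambda>\<rho>. B' * (1 / ((\<rho>\<^sup>2 - r\<^sup>2) powr s * \<rho>)))"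
      using mean_kernel_integral(1)[OF s r] by (rule set_integrable_mult_right)
    show "\<bar>?FD \<rho>\<bar> \<le> B' * (1 / ((\<rho>\<^sup>2 - r\<^sup>2) powr s * \<rho>))" if "\<rho> \<in> {r<..}" for \<rho>
      using that r F_bdd[of \<rho>] by (simp add: abs_divide divide_right_mono)
  qed (unfold set_borel_measurable_def, measurable)
  have diff_bound: "\<bar>?FD \<rho> - ?FE \<rho>\<bar> \<le> ?diff \<rho>" if "\<rho> \<in> {r<..}" for \<rho>
    using that s r F_quad[of \<rho>] by (intro mean_kernel_diff_le) auto
  have diff_meas: "set_borel_measurable lborel {r<..} (\<lambda>\<rho>. ?FD \<rho> - ?FE \<rho>)"
    unfolding set_borel_measurable_def by measurable
  have "set_integrable lborel {r<..} ?diff"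
    using mean_kernel_diff_integral(1)[OF s r] by (rule set_integrable_mult_right)
  note diff = set_integrable_abs_le[OF this diff_meas diff_bound]
  show "set_integrable lborel {r<..} ?FD" by (fact FD_int)
  have "set_integrable lborel {r<..} (\<lambda>\<rho>. ?FD \<rho> - (?FD \<rho> - ?FE \<rho>))"
    using FD_int diff(1) by (rule set_integral_diff)
  then show FE_int: "set_integrable lborel {r<..} ?FE" by simp
  have "(LINT \<rho>:{r<..}|lborel. ?diff \<rho>) = B * r powr (2 - 2 * s) / (2 - 2 * s)"
    using mean_kernel_diff_integral(2)[OF s r] by simp
  then show "\<bar>(LINT \<rho>:{r<..}|lborel. ?FD \<rho>) - (LINT \<rho>:{r<..}|lborel. ?FE \<rho>)\<bar>
               \<le> B * r powr (2 - 2 * s) / (2 - 2 * s)"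
    using diff(2) set_integral_diff(2)[OF FD_int FE_int] by simp
qed

lemma mean_kernel_head_bound:
  fixes F :: "real \<Rightarrow> real"
  assumes F_meas: "F \<in> borel_measurable borel"
    and F_quad: "\<And>\<rho>. 0 < \<rho> \<Longrightarrow> \<bar>F \<rho>\<bar> \<le> B * \<rho>\<^sup>2"
    and s: "0 < s" "s < 1" and r: "0 < r"
  shows "set_integrable lborel {0<..r} (\<lambda>\<rho>. F \<rho> / \<rho> powr (1 + 2 * s))"
    and "\<bar>LINT \<rho>:{0<..r}|lborel. F \<rho> / \<rho> powr (1 + 2 * s)\<bar> \<le> B * r powr (2 - 2 * s) / (2 - 2 * s)"
proof -
  have [measurable]: "F \<in> borel_measurable lborel" using F_meas by simp
  note pow = set_integral_powr_Ioc[of "1 - 2 * s" r]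
  have bound: "\<bar>F \<rho> / \<rho> powr (1 + 2 * s)\<bar> \<le> B * \<rho> powr (1 - 2 * s)" if "\<rho> \<in> {0<..r}" for \<rho>
  proof -
    have "\<bar>F \<rho> / \<rho> powr (1 + 2 * s)\<bar> \<le> B * \<rho>\<^sup>2 / \<rho> powr (1 + 2 * s)"
      using that F_quad[of \<rho>] by (simp add: abs_divide divide_right_mono)
    also have "\<dots> = B * \<rho> powr (1 - 2 * s)"
      using that power2_div_powr[of \<rho> "1 + 2 * s"] by (simp flip: times_divide_eq_right)
    finally show ?thesis .
  qed
  have "set_integrable lborel {0<..r} (\<lambda>\<rho>. B * \<rho> powr (1 - 2 * s))"
    using pow(1) s r by (intro set_integrable_mult_right) auto
  note head = set_integrable_abs_le[OF this _ bound]
  show "set_integrable lborel {0<..r} (\<lambda>\<rho>. F \<rho> / \<rho> powr (1 + 2 * s))"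
    by (rule head(1)) (unfold set_borel_measurable_def, measurable)
  have "(LINT \<rho>:{0<..r}|lborel. B * \<rho> powr (1 - 2 * s)) = B * r powr (2 - 2 * s) / (2 - 2 * s)"
    using pow(2) s r by (simp add: diff_add_eq)
  then show "\<bar>LINT \<rho>:{0<..r}|lborel. F \<rho> / \<rho> powr (1 + 2 * s)\<bar> \<le> B * r powr (2 - 2 * s) / (2 - 2 * s)"
    using head(2) by (simp add: set_borel_measurable_def)
qed

lemma mean_kernel_approx:
  fixes F :: "real \<Rightarrow> real"
  assumes F_meas: "F \<in> borel_measurable borel"
    and F_quad: "\<And>\<rho>. 0 < \<rho> \<Longrightarrow> \<bar>F \<rho>\<bar> \<le> B * \<rho>\<^sup>2" and F_bdd: "\<And>\<rho>. \<bar>F \<rho>\<bar> \<le> B'"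
    and s: "0 < s" "s < 1" and r: "0 < r"
  shows "set_integrable lborel {r<..} (\<lambda>\<rho>. F \<rho> / ((\<rho>\<^sup>2 - r\<^sup>2) powr s * \<rho>))"
    and "\<bar>(LINT \<rho>:{r<..}|lborel. F \<rho> / ((\<rho>\<^sup>2 - r\<^sup>2) powr s * \<rho>))
          - (LINT \<rho>:{0<..}|lborel. F \<rho> / \<rho> powr (1 + 2 * s))\<bar> \<le> B * r powr (2 - 2 * s) / (1 - s)"
proof -
  note tail = mean_kernel_tail_bound[OF F_meas F_quad F_bdd s r]
  note head = mean_kernel_head_bound[OF F_meas F_quad s r]
  show "set_integrable lborel {r<..} (\<lambda>\<rho>. F \<rho> / ((\<rho>\<^sup>2 - r\<^sup>2) powr s * \<rho>))"
    by (rule tail(1))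
  have split: "{0<..} = {0<..r} \<union> {r<..}" using r by auto
  have "(LINT \<rho>:{0<..}|lborel. F \<rho> / \<rho> powr (1 + 2 * s))
          = (LINT \<rho>:{0<..r}|lborel. F \<rho> / \<rho> powr (1 + 2 * s)) + (LINT \<rho>:{r<..}|lborel. F \<rho> / \<rho> powr (1 + 2 * s))"
    unfolding split by (rule set_integral_Un[OF _ head(1) tail(2)]) auto
  moreover have "B * r powr (2 - 2 * s) / (2 - 2 * s) + B * r powr (2 - 2 * s) / (2 - 2 * s)
                   = B * r powr (2 - 2 * s) / (1 - s)"
    by (simp add: add_divide_distrib[symmetric] divide_simps)
  ultimately show "\<bar>(LINT \<rho>:{r<..}|lborel. F \<rho> / ((\<rho>\<^sup>2 - r\<^sup>2) powr s * \<rho>))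
          - (LINT \<rho>:{0<..}|lborel. F \<rho> / \<rho> powr (1 + 2 * s))\<bar> \<le> B * r powr (2 - 2 * s) / (1 - s)"
    using head(2) tail(3) by linarith
qed

lemma delta_u_abs_le:
  assumes "\<And>z. \<bar>u z\<bar> \<le> M"
  shows "\<bar>delta_u u x y\<bar> \<le> 4 * M"
  using assms[of x] assms[of "x - y"] assms[of "x + y"] unfolding delta_u_def by linarith

lemma delta_u_local_bound:
  fixes u :: "'a::euclidean_space \<Rightarrow> real" and Du :: "'a \<Rightarrow> 'a \<Rightarrow>\<^sub>L real"
  assumes du: "\<And>z. z \<in> cball x e \<Longrightarrow> (u has_derivative blinfun_apply (Du z)) (at z)"
    and lip: "\<And>z. z \<in> cball x e \<Longrightarrow> norm (Du z - Du x) \<le> K * norm (z - x)"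
    and "0 \<le> K" and y: "norm y \<le> e"
  shows "\<bar>delta_u u x y\<bar> \<le> 2 * K * (norm y)\<^sup>2"
proof -
  define t where "t = norm y"
  define \<phi> where "\<phi> = (\<lambda>z. u (x + z) + u (x - z))"
  have in_ball: "x + z \<in> cball x e" "x - z \<in> cball x e" if "z \<in> cball 0 t" for z
    using that y by (auto simp: t_def dist_norm)
  have \<phi>_deriv: "(\<phi> has_derivative blinfun_apply (Du (x + z) - Du (x - z))) (at z within cball 0 t)"
    if z: "z \<in> cball 0 t" for z
  proof -
    have "(\<phi> has_derivative (\<lambda>h. Du (x + z) h + Du (x - z) (- h))) (at z within cball 0 t)"
      unfolding \<phi>_def
      by (intro has_derivative_add has_derivative_compose[of "\<lambda>z. x + z" _ _ _ u]
            has_derivative_compose[of "\<lambda>z. x - z" _ _ _ u] derivative_intros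
            has_derivative_at_withinI[OF du] in_ball[OF z])
         (auto intro!: derivative_eq_intros)
    moreover have "(\<lambda>h. Du (x + z) h + Du (x - z) (- h)) = blinfun_apply (Du (x + z) - Du (x - z))"
      by (simp add: fun_eq_iff blinfun.minus_right blinfun.diff_left)
    ultimately show ?thesis by simp
  qed
  have \<phi>_deriv_bound: "onorm (blinfun_apply (Du (x + z) - Du (x - z))) \<le> 2 * K * t"
    if z: "z \<in> cball 0 t" for z
  proof -
    have "norm (Du (x + z) - Du (x - z)) \<le> norm (Du (x + z) - Du x) + norm (Du (x - z) - Du x)"
      by (metis diff_diff_eq2 diff_add_cancel norm_triangle_ineq4)
    also have "\<dots> \<le> K * norm z + K * norm z"
      using lip[OF in_ball(1)[OF z]] lip[OF in_ball(2)[OF z]] by simp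
    also have "\<dots> \<le> 2 * K * t"
      using z \<open>0 \<le> K\<close> by (simp add: mult_left_mono)
    finally show ?thesis by (simp add: norm_blinfun.rep_eq)
  qed
  have "norm (\<phi> y - \<phi> 0) \<le> 2 * K * t * norm (y - 0)"
    by (rule differentiable_bound[OF convex_cball \<phi>_deriv \<phi>_deriv_bound]) (auto simp: t_def)
  moreover have "delta_u u x y = \<phi> 0 - \<phi> y" by (simp add: delta_u_def \<phi>_def)
  ultimately show ?thesis by (simp add: t_def power2_eq_square abs_minus_commute mult_ac)
qed

lemma C2_on_derivative_lipschitz:
  fixes u :: "'a::euclidean_space \<Rightarrow> real"
  assumes "open \<Omega>" "C2_on \<Omega> u" "x \<in> \<Omega>"
  obtains e K and Du :: "'a \<Rightarrow> 'a \<Rightarrow>\<^sub>L real" where "0 < e" "0 \<le> K"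
    "\<And>z. z \<in> cball x e \<Longrightarrow> (u has_derivative blinfun_apply (Du z)) (at z)"
    "\<And>z. z \<in> cball x e \<Longrightarrow> norm (Du z - Du x) \<le> K * norm (z - x)"
proof -
  obtain Du :: "'a \<Rightarrow> 'a \<Rightarrow>\<^sub>L real" and D2u :: "'a \<Rightarrow> 'a \<Rightarrow>\<^sub>L 'a \<Rightarrow>\<^sub>L real" where
    du: "\<And>z. z \<in> \<Omega> \<Longrightarrow> (u has_derivative blinfun_apply (Du z)) (at z)" and
    d2u: "\<And>z. z \<in> \<Omega> \<Longrightarrow> (Du has_derivative blinfun_apply (D2u z)) (at z)" and
    cont: "continuous_on \<Omega> D2u"
    using assms(2) unfolding C2_on_def by auto
  obtain e where e: "0 < e" "cball x e \<subseteq> \<Omega>" using assms(1,3) open_contains_cball by blast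
  have "bounded (D2u ` cball x e)"
    by (intro compact_imp_bounded compact_continuous_image continuous_on_subset[OF cont e(2)]) simp
  then obtain K where "\<forall>w\<in>D2u ` cball x e. norm w \<le> K"
    unfolding bounded_iff by blast
  then have K: "\<And>z. z \<in> cball x e \<Longrightarrow> norm (D2u z) \<le> K" by blast
  have K_nonneg: "0 \<le> K" using K[of x] e(1) norm_ge_zero[of "D2u x"] by (simp del: norm_ge_zero)
  have d2u_within: "(Du has_derivative blinfun_apply (D2u w)) (at w within cball x e)"
    if "w \<in> cball x e" for w
    using that e(2) by (auto intro!: has_derivative_at_withinI[OF d2u])
  have d2u_bound: "onorm (blinfun_apply (D2u w)) \<le> K" if "w \<in> cball x e" for w
    using K[OF that] by (simp add: norm_blinfun.rep_eq)
  have centre: "x \<in> cball x e" using e(1) by simp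
  show ?thesis
  proof (rule that[OF e(1) K_nonneg])
    show "(u has_derivative blinfun_apply (Du z)) (at z)" if "z \<in> cball x e" for z
      using that e(2) by (intro du) auto
    show "norm (Du z - Du x) \<le> K * norm (z - x)" if "z \<in> cball x e" for z
      by (rule differentiable_bound[OF convex_cball d2u_within d2u_bound that centre])
  qed
qed

lemma delta_u_quadratic_bound:
  fixes u :: "'a::euclidean_space \<Rightarrow> real"
  assumes "open \<Omega>" "C2_on \<Omega> u" "x \<in> \<Omega>" and u_bdd: "\<And>z. \<bar>u z\<bar> \<le> M"
  obtains C where "0 \<le> C" "\<And>y. \<bar>delta_u u x y\<bar> \<le> C * (norm y)\<^sup>2"
proof -
  obtain e K and Du :: "'a \<Rightarrow> 'a \<Rightarrow>\<^sub>L real" where e: "0 < e" and K: "0 \<le> K"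
    and du: "\<And>z. z \<in> cball x e \<Longrightarrow> (u has_derivative blinfun_apply (Du z)) (at z)"
    and lip: "\<And>z. z \<in> cball x e \<Longrightarrow> norm (Du z - Du x) \<le> K * norm (z - x)"
    using C2_on_derivative_lipschitz[OF assms(1-3)] by blast
  define C where "C = max (2 * K) (4 * M / e\<^sup>2)"
  have "\<bar>delta_u u x y\<bar> \<le> C * (norm y)\<^sup>2" for y
  proof (cases "norm y \<le> e")
    case True
    have "2 * K * (norm y)\<^sup>2 \<le> C * (norm y)\<^sup>2" by (intro mult_right_mono) (auto simp: C_def)
    then show ?thesis using delta_u_local_bound[OF du lip K True] by linarith
  next
    case False
    have "\<bar>delta_u u x y\<bar> \<le> (4 * M / e\<^sup>2) * e\<^sup>2"
      using delta_u_abs_le[OF u_bdd] e by simp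
    also have "\<dots> \<le> (4 * M / e\<^sup>2) * (norm y)\<^sup>2"
      using False e u_bdd[of x] by (intro mult_left_mono power_mono) auto
    also have "\<dots> \<le> C * (norm y)\<^sup>2" by (intro mult_right_mono) (auto simp: C_def)
    finally show ?thesis .
  qed
  moreover have "0 \<le> C" using K by (simp add: C_def)
  ultimately show ?thesis using that by blast
qed

definition spherical_delta :: "'a::euclidean_space measure \<Rightarrow> ('a \<Rightarrow> real) \<Rightarrow> 'a \<Rightarrow> real \<Rightarrow> real" where
  "spherical_delta a u x \<rho> = (\<integral>\<omega>. delta_u u x (\<rho> *\<^sub>R \<omega>) \<partial>a)"

lemma spectral_measureD:
  assumes "spectral_measure (a :: 'a::euclidean_space measure)"
  shows "finite_measure a" "space a = sphere 0 1" "(\<lambda>\<omega>. \<omega>) \<in> borel_measurable a"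
    "0 < measure a (space a)"
proof -
  have sets_a: "sets a = sets (restrict_space borel (sphere (0::'a) 1))"
    and fin: "finite_measure a" and pos: "0 < emeasure a (space a)"
    using assms unfolding spectral_measure_def by auto
  show "finite_measure a" by (fact fin)
  show "space a = sphere 0 1"
    using sets_eq_imp_space_eq[OF sets_a] by (simp add: space_restrict_space)
  show "(\<lambda>\<omega>. \<omega>) \<in> borel_measurable a"
    by (subst measurable_cong_sets[OF sets_a refl]) (rule measurable_restrict_space1, simp)
  show "0 < measure a (space a)"
    using pos finite_measure.emeasure_eq_measure[OF fin] by simp
qed

lemma (in finite_measure) abs_integral_le_measure_mult:
  fixes f :: "'a \<Rightarrow> real"
  assumes f: "integrable M f" and le: "\<And>x. x \<in> space M \<Longrightarrow> \<bar>f x\<bar> \<le> c"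
  shows "\<bar>\<integral>x. f x \<partial>M\<bar> \<le> measure M (space M) * c"
proof -
  have "\<bar>\<integral>x. f x \<partial>M\<bar> \<le> (\<integral>x. \<bar>f x\<bar> \<partial>M)"
    by (rule integral_abs_bound)
  also have "\<dots> \<le> (\<integral>x. c \<partial>M)"
    by (rule integral_mono) (use f le in auto)
  finally show ?thesis by (simp add: mult.commute)
qed

lemma cnsa_mean_kernel_integral:
  assumes pos: "0 < measure a (space a)" and s: "0 < s" "s < 1" and r: "0 < r"
  shows "cnsa s a * r powr (2 * s) * (LINT \<rho>:{r<..}|lborel. 1 / ((\<rho>\<^sup>2 - r\<^sup>2) powr s * \<rho>))
           = 1 / (2 * measure a (space a))"
proof -
  have "0 < sin (pi * s)" using s by (intro sin_gt_zero) auto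
  moreover have "r powr (2 * s) * r powr (- (2 * s)) = 1" using r by (simp flip: powr_add)
  ultimately show ?thesis
    unfolding mean_kernel_integral(2)[OF s r] using pos by (simp add: cnsa_def field_simps)
qed

context
  fixes a :: "'a::euclidean_space measure" and u :: "'a \<Rightarrow> real" and x :: 'a and M :: real
  assumes fin: "finite_measure a" and id_meas [measurable]: "(\<lambda>\<omega>. \<omega>) \<in> borel_measurable a"
    and u_meas [measurable]: "u \<in> borel_measurable borel" and u_bdd: "\<And>z. \<bar>u z\<bar> \<le> M"
begin

interpretation finite_measure a by (fact fin)

lemma integrable_delta_u_sphere: "integrable a (\<lambda>\<omega>. delta_u u x (\<rho> *\<^sub>R \<omega>))"
  by (rule integrable_const_bound[where B="4 * M"])
     (use delta_u_abs_le[of u M, OF u_bdd] in \<open>auto simp: delta_u_def\<close>)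

lemma spherical_delta_measurable: "spherical_delta a u x \<in> borel_measurable borel"
proof -
  have "(\<lambda>(\<rho>::real, \<omega>). delta_u u x (\<rho> *\<^sub>R \<omega>)) \<in> borel_measurable (borel \<Otimes>\<^sub>M a)"
    unfolding delta_u_def by measurable
  then show ?thesis
    unfolding spherical_delta_def by (rule borel_measurable_lebesgue_integral)
qed

lemma spherical_delta_bounded: "\<bar>spherical_delta a u x \<rho>\<bar> \<le> measure a (space a) * (4 * M)"
  unfolding spherical_delta_def
  using abs_integral_le_measure_mult[OF integrable_delta_u_sphere delta_u_abs_le[of u M, OF u_bdd]] .

lemma spherical_delta_quadratic:
  assumes sphere: "space a \<subseteq> cball 0 1" and C: "0 \<le> C" "\<And>y. \<bar>delta_u u x y\<bar> \<le> C * (norm y)\<^sup>2"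
  shows "\<bar>spherical_delta a u x \<rho>\<bar> \<le> (measure a (space a) * C) * \<rho>\<^sup>2"
proof -
  have "C * (norm (\<rho> *\<^sub>R \<omega>))\<^sup>2 \<le> C * \<rho>\<^sup>2" if "\<omega> \<in> space a" for \<omega>
    using that sphere C(1) by (auto simp: power_mult_distrib intro!: mult_left_mono mult_left_le power_le_one)
  then have "\<bar>spherical_delta a u x \<rho>\<bar> \<le> measure a (space a) * (C * \<rho>\<^sup>2)"
    unfolding spherical_delta_def
    by (intro abs_integral_le_measure_mult[OF integrable_delta_u_sphere] order.trans[OF C(2)])
  then show ?thesis by (simp add: mult.assoc)
qed

lemma integral_sphere_pair_eq:
  "(\<integral>\<omega>. u (x + \<rho> *\<^sub>R \<omega>) + u (x - \<rho> *\<^sub>R \<omega>) \<partial>a)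
     = 2 * u x * measure a (space a) - spherical_delta a u x \<rho>"
proof -
  have "(\<integral>\<omega>. u (x + \<rho> *\<^sub>R \<omega>) + u (x - \<rho> *\<^sub>R \<omega>) \<partial>a) = (\<integral>\<omega>. 2 * u x - delta_u u x (\<rho> *\<^sub>R \<omega>) \<partial>a)"
    by (simp add: delta_u_def add.commute)
  also have "\<dots> = (\<integral>\<omega>. 2 * u x \<partial>a) - spherical_delta a u x \<rho>"
    unfolding spherical_delta_def
    by (rule Bochner_Integration.integral_diff[OF integrable_const integrable_delta_u_sphere])
  finally show ?thesis by simp
qed

lemma Mop_eq_spherical_delta:
  assumes pos: "0 < measure a (space a)" and s: "0 < s" "s < 1" and r: "0 < r"
    and int: "set_integrable lborel {r<..} (\<lambda>\<rho>. spherical_delta a u x \<rho> / ((\<rho>\<^sup>2 - r\<^sup>2) powr s * \<rho>))"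
  shows "Mop s a r u x = u x - cnsa s a * r powr (2 * s) *
           (LINT \<rho>:{r<..}|lborel. spherical_delta a u x \<rho> / ((\<rho>\<^sup>2 - r\<^sup>2) powr s * \<rho>))"
proof -
  define A where "A = measure a (space a)"
  define D where "D = (\<lambda>\<rho>. (\<rho>\<^sup>2 - r\<^sup>2) powr s * \<rho>)"
  define J where "J = (LINT \<rho>:{r<..}|lborel. 1 / D \<rho>)"
  have J_int: "set_integrable lborel {r<..} (\<lambda>\<rho>. 2 * u x * A * (1 / D \<rho>))"
    using mean_kernel_integral(1)[OF s r] unfolding D_def by (rule set_integrable_mult_right)
  have "(LINT \<rho>:{r<..}|lborel. 2 * u x * A * (1 / D \<rho>)) = 2 * u x * A * J"
    unfolding J_def by (rule set_integral_mult_right)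
  then have diff_eq: "(LINT \<rho>:{r<..}|lborel. 2 * u x * A * (1 / D \<rho>) - spherical_delta a u x \<rho> / D \<rho>)
      = 2 * u x * A * J - (LINT \<rho>:{r<..}|lborel. spherical_delta a u x \<rho> / D \<rho>)"
    using set_integral_diff(2)[OF J_int] int by (simp add: D_def)
  have "cnsa s a * r powr (2 * s) * (2 * A * J) = 2 * A * (cnsa s a * r powr (2 * s) * J)"
    by (simp only: mult_ac)
  also have "\<dots> = 1"
    using cnsa_mean_kernel_integral[OF pos s r] pos by (simp add: A_def J_def D_def)
  finally have normalised: "cnsa s a * r powr (2 * s) * (2 * A * J) = 1" .
  have "Mop s a r u x = cnsa s a * r powr (2 * s) *
      (LINT \<rho>:{r<..}|lborel. 2 * u x * A * (1 / D \<rho>) - spherical_delta a u x \<rho> / D \<rho>)"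
    by (simp add: Mop_def integral_sphere_pair_eq A_def D_def diff_divide_distrib)
  also have "\<dots> = u x * (cnsa s a * r powr (2 * s) * (2 * A * J))
      - cnsa s a * r powr (2 * s) * (LINT \<rho>:{r<..}|lborel. spherical_delta a u x \<rho> / D \<rho>)"
    unfolding diff_eq by (simp add: algebra_simps)
  finally show ?thesis
    by (simp add: normalised D_def)
qed

lemma mean_value_error_eq:
  assumes pos: "0 < measure a (space a)" and s: "0 < s" "s < 1" and r: "0 < r"
    and int: "set_integrable lborel {r<..} (\<lambda>\<rho>. spherical_delta a u x \<rho> / ((\<rho>\<^sup>2 - r\<^sup>2) powr s * \<rho>))"
  shows "u x - Mop s a r u x - cnsa s a * r powr (2 * s) * Lop s a u x
           = cnsa s a * r powr (2 * s) *
             ((LINT \<rho>:{r<..}|lborel. spherical_delta a u x \<rho> / ((\<rho>\<^sup>2 - r\<^sup>2) powr s * \<rho>))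
              - (LINT \<rho>:{0<..}|lborel. spherical_delta a u x \<rho> / \<rho> powr (1 + 2 * s)))"
proof -
  have "Lop s a u x = (LINT \<rho>:{0<..}|lborel. spherical_delta a u x \<rho> / \<rho> powr (1 + 2 * s))"
    by (simp add: Lop_def spherical_delta_def)
  then show ?thesis
    by (simp add: Mop_eq_spherical_delta[OF pos s r int] algebra_simps)
qed

lemma mean_value_error_bound:
  assumes sphere: "space a \<subseteq> cball 0 1" and pos: "0 < measure a (space a)"
    and s: "0 < s" "s < 1" and C: "0 \<le> C" "\<And>y. \<bar>delta_u u x y\<bar> \<le> C * (norm y)\<^sup>2"
    and r: "0 < r"
  shows "\<bar>u x - Mop s a r u x - cnsa s a * r powr (2 * s) * Lop s a u x\<bar>
           \<le> cnsa s a * (measure a (space a) * C) / (1 - s) * r\<^sup>2"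
proof -
  note approx = mean_kernel_approx[OF spherical_delta_measurable
      spherical_delta_quadratic[OF sphere C] spherical_delta_bounded s r]
  have "0 < sin (pi * s)" using s by (intro sin_gt_zero) auto
  then have c_pos: "0 < cnsa s a" using pos by (simp add: cnsa_def)
  have "\<bar>u x - Mop s a r u x - cnsa s a * r powr (2 * s) * Lop s a u x\<bar>
      = cnsa s a * r powr (2 * s) *
        \<bar>(LINT \<rho>:{r<..}|lborel. spherical_delta a u x \<rho> / ((\<rho>\<^sup>2 - r\<^sup>2) powr s * \<rho>))
         - (LINT \<rho>:{0<..}|lborel. spherical_delta a u x \<rho> / \<rho> powr (1 + 2 * s))\<bar>"
    unfolding mean_value_error_eq[OF pos s r approx(1)] using c_pos by (simp add: abs_mult)
  also have "\<dots> \<le> cnsa s a * r powr (2 * s) * ((measure a (space a) * C) * r powr (2 - 2 * s) / (1 - s))"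
    using c_pos by (intro mult_left_mono approx(2)) simp
  also have "\<dots> = cnsa s a * (measure a (space a) * C) / (1 - s) * (r powr (2 * s) * r powr (2 - 2 * s))"
    by simp
  also have "r powr (2 * s) * r powr (2 - 2 * s) = r\<^sup>2"
    using r by (simp flip: powr_add add: powr_numeral)
  finally show ?thesis .
qed

end

theorem theorem2p2:
  fixes s :: real and a :: "'a::euclidean_space measure"
    and \<Omega> :: "'a set" and u :: "'a \<Rightarrow> real" and x :: 'a
  assumes "0 < s" "s < 1"
    and "spectral_measure a"
    and "open \<Omega>"
    and "C2_on \<Omega> u"
    and "u \<in> borel_measurable borel" "bounded (range u)"
    and "x \<in> \<Omega>"
  shows "(\<lambda>r. u x - Mop s a r u x - cnsa s a * r powr (2 * s) * Lop s a u x)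
           \<in> O[at_right 0](\<lambda>r. r\<^sup>2)"
proof -
  note a = spectral_measureD[OF assms(3)]
  obtain M where M: "\<And>z. \<bar>u z\<bar> \<le> M"
    using assms(7) unfolding bounded_iff by auto
  obtain C where C: "0 \<le> C" "\<And>y. \<bar>delta_u u x y\<bar> \<le> C * (norm y)\<^sup>2"
    using delta_u_quadratic_bound[OF assms(4,5,8) M] by blast
  have sphere: "space a \<subseteq> cball 0 1" using a(2) by auto
  note bound = mean_value_error_bound[OF a(1,3) assms(6) M sphere a(4) assms(1,2) C]
  show ?thesis
  proof (rule bigoI)
    show "\<forall>\<^sub>F r in at_right 0. norm (u x - Mop s a r u x - cnsa s a * r powr (2 * s) * Lop s a u x)
            \<le> cnsa s a * (measure a (space a) * C) / (1 - s) * norm (r\<^sup>2)"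
      using eventually_at_right_less[of "0::real"] by eventually_elim (use bound in simp)
  qed
qed

end
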